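(* In symmetric private information retrieval with $N=2$ databases and $K=3$ messages of length $L$, when the upload cost is $U=2\log_2 4=4$, the optimal (minimum achievable) download cost is $D=2L$, and the minimal amount of required common randomness is $H(\mathcal{R})=L$.
   Context: SPIR setting: each of $N$ non-colluding databases stores the same $K$ i.i.d. messages $W_1,\dots,W_K$, each consisting of $L$ i.i.d. uniform symbols from a sufficiently large finite field $\mathbb{F}_q$ (entropies in $q$-ary units, $H(W_k)=L$, $H(W_{1:K})=KL$). The user wants $W_k$, $k\in[K]$, with private randomness $\mathcal{F}$; the databases share common randomness $\mathcal{R}$, and $I(W_{1:K};k,\mathcal{F},\mathcal{R})=0$. Queries $Q_n^{[k]}$ are deterministic functions of $\mathcal{F}$; answers satisfy $H(A_n^{[k]}\mid Q_n^{[k]},W_{1:K},\mathcal{R})=0$. Achievability requires reliability $H(W_k\mid\mathcal{F},A_{1:N}^{[k]})=0$; user privacy: for all $n$ and $k'\neq k$, $(Q_n^{[k]},A_n^{[k]},W_{1:K},\mathcal{R})\sim(Q_n^{[k']},A_n^{[k']},W_{1:K},\mathcal{R})$; database privacy $I(W_{\bar k};\mathcal{F},A_{1:N}^{[k]})=0$ with $W_{\bar k}=\{W_j:j\neq k\}$. Upload cost $U$: total number of bits sent from user to databases ($U=4$ when each of the two queries takes one of 4 values). Download cost $D$: total size of the answers (in the same units as $L$). Common randomness amount: $H(\mathcal{R})$. *)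

theory Defs
  imports "HOL-Probability.Probability_Mass_Function" "HOL-Library.FuncSet"
begin

(* Messages are indexed 0..K-1 (paper: 1..K), symbols 0..L-1.
   A message tuple W_{1:K} is an (extensional) array  W :: nat => nat => 'a
   with W k l the l-th symbol of message k.
   Sample point omega = (W, F, R): messages, user randomness, common randomness. *)

definition msgs :: "nat \<Rightarrow> nat \<Rightarrow> (nat \<Rightarrow> nat \<Rightarrow> 'a) set" where
  "msgs K L = Pi\<^sub>E {..<K} (\<lambda>_. Pi\<^sub>E {..<L} (\<lambda>_. (UNIV :: 'a set)))"

definition pmf_entropy :: "real \<Rightarrow> 'x pmf \<Rightarrow> real" where
  "pmf_entropy b p = - (\<Sum>x\<in>set_pmf p. pmf p x * log b (pmf p x))"

definition ent :: "real \<Rightarrow> 'w pmf \<Rightarrow> ('w \<Rightarrow> 'x) \<Rightarrow> real" where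
  "ent b M X = pmf_entropy b (map_pmf X M)"

definition cond_ent :: "real \<Rightarrow> 'w pmf \<Rightarrow> ('w \<Rightarrow> 'x) \<Rightarrow> ('w \<Rightarrow> 'y) \<Rightarrow> real" where
  "cond_ent b M X Y = ent b M (\<lambda>w. (X w, Y w)) - ent b M Y"

definition mutual_info :: "real \<Rightarrow> 'w pmf \<Rightarrow> ('w \<Rightarrow> 'x) \<Rightarrow> ('w \<Rightarrow> 'y) \<Rightarrow> real" where
  "mutual_info b M X Y = ent b M X + ent b M Y - ent b M (\<lambda>w. (X w, Y w))"

definition spir_space :: "nat \<Rightarrow> nat \<Rightarrow> 'f pmf \<Rightarrow> 'r pmf
    \<Rightarrow> ((nat \<Rightarrow> nat \<Rightarrow> 'a::finite) \<times> 'f \<times> 'r) pmf" where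
  "spir_space K L pF pR = pair_pmf (pmf_of_set (msgs K L)) (pair_pmf pF pR)"

definition query :: "(nat \<Rightarrow> nat \<Rightarrow> 'f \<Rightarrow> 'q) \<Rightarrow> nat \<Rightarrow> nat \<Rightarrow> 'w \<times> 'f \<times> 'r \<Rightarrow> 'q" where
  "query qry n k \<omega> = qry n k (fst (snd \<omega>))"

definition answer :: "(nat \<Rightarrow> nat \<Rightarrow> 'f \<Rightarrow> 'q) \<Rightarrow> (nat \<Rightarrow> 'q \<Rightarrow> 'w \<Rightarrow> 'r \<Rightarrow> 'b)
    \<Rightarrow> nat \<Rightarrow> nat \<Rightarrow> 'w \<times> 'f \<times> 'r \<Rightarrow> 'b" where
  "answer qry ans n k \<omega> = ans n (query qry n k \<omega>) (fst \<omega>) (snd (snd \<omega>))"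

definition answers :: "nat \<Rightarrow> (nat \<Rightarrow> nat \<Rightarrow> 'f \<Rightarrow> 'q) \<Rightarrow> (nat \<Rightarrow> 'q \<Rightarrow> 'w \<Rightarrow> 'r \<Rightarrow> 'b)
    \<Rightarrow> nat \<Rightarrow> 'w \<times> 'f \<times> 'r \<Rightarrow> 'b list" where
  "answers N qry ans k \<omega> = map (\<lambda>n. answer qry ans n k \<omega>) [0..<N]"

definition other_msgs :: "nat \<Rightarrow> nat \<Rightarrow> (nat \<Rightarrow> 'm) \<Rightarrow> 'm list" where
  "other_msgs K k W = map W (filter (\<lambda>j. j \<noteq> k) [0..<K])"

(* Achievable SPIR scheme with N databases, K messages of length L over F_q,
   entropies in q-ary units (q = CARD('a)). *)
definition spir_scheme :: "nat \<Rightarrow> nat \<Rightarrow> nat \<Rightarrow> 'f pmf \<Rightarrow> 'r pmf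
    \<Rightarrow> (nat \<Rightarrow> nat \<Rightarrow> 'f \<Rightarrow> 'q)
    \<Rightarrow> (nat \<Rightarrow> 'q \<Rightarrow> (nat \<Rightarrow> nat \<Rightarrow> 'a::{finite,field}) \<Rightarrow> 'r \<Rightarrow> 'b) \<Rightarrow> bool" where
  "spir_scheme N K L pF pR qry ans \<longleftrightarrow>
     (let M = (spir_space K L pF pR :: ((nat \<Rightarrow> nat \<Rightarrow> 'a) \<times> 'f \<times> 'r) pmf);
          b = real CARD('a) in
      finite (set_pmf pF) \<and> finite (set_pmf pR) \<and>
      (\<forall>k<K. cond_ent b M (\<lambda>\<omega>. fst \<omega> k)
                 (\<lambda>\<omega>. (fst (snd \<omega>), answers N qry ans k \<omega>)) = 0) \<and>
      (\<forall>n<N. \<forall>k<K. \<forall>k'<K.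
         map_pmf (\<lambda>\<omega>. (query qry n k \<omega>, answer qry ans n k \<omega>, fst \<omega>, snd (snd \<omega>))) M =
         map_pmf (\<lambda>\<omega>. (query qry n k' \<omega>, answer qry ans n k' \<omega>, fst \<omega>, snd (snd \<omega>))) M) \<and>
      (\<forall>k<K. mutual_info b M (\<lambda>\<omega>. other_msgs K k (fst \<omega>))
                 (\<lambda>\<omega>. (fst (snd \<omega>), answers N qry ans k \<omega>)) = 0))"

definition upload_cost :: "nat \<Rightarrow> nat \<Rightarrow> 'f pmf \<Rightarrow> (nat \<Rightarrow> nat \<Rightarrow> 'f \<Rightarrow> 'q) \<Rightarrow> real" where
  "upload_cost N K pF qry =
     (\<Sum>n<N. log 2 (real (card {qry n k f | k f. k < K \<and> f \<in> set_pmf pF})))"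

definition download_cost :: "nat \<Rightarrow> nat \<Rightarrow> nat \<Rightarrow> 'f pmf \<Rightarrow> 'r pmf
    \<Rightarrow> (nat \<Rightarrow> nat \<Rightarrow> 'f \<Rightarrow> 'q)
    \<Rightarrow> (nat \<Rightarrow> 'q \<Rightarrow> (nat \<Rightarrow> nat \<Rightarrow> 'a::{finite,field}) \<Rightarrow> 'r \<Rightarrow> 'b) \<Rightarrow> real" where
  "download_cost N K L pF pR qry ans =
     (\<Sum>n<N. log (real CARD('a))
        (real (card {answer qry ans n k \<omega> | k \<omega>. k < K \<and>
            \<omega> \<in> set_pmf (spir_space K L pF pR :: ((nat \<Rightarrow> nat \<Rightarrow> 'a) \<times> 'f \<times> 'r) pmf)})))"

end

theory Submission
  imports Defs "HOL-Probability.Information"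
begin

(* Fix the retrieval of W 0.  Database privacy in the retrieval of W 1 hides W 0 from the
   view of a single server, and user privacy transfers this to the retrieval of W 0; since the user
   randomness F reaches a server only through its query, a single answer A_n is independent of W 0
   even given F.  Reliability then forces H(A_n | A_(1-n), F) >= L, so each answer has at least q^L
   possible values (D >= 2L), and H(A_0, A_1 | F) >= 2L.  Database privacy in the retrieval of W 0
   bounds the same quantity by L + H(R), whence H(R) >= L.

   The user picks a uniformly random even-size subset S of the three messages and
   sends S to server 0 and S with k toggled to server 1; each server returns the sum of the selected
   messages plus a common uniform pad R.  The answers differ by +-W k, each query alone is uniform
   over four values whatever k is, and the pad hides everything but W k. *)

section \<open>Entropy of random variables on a finite probability space\<close>

definition determines :: "'w pmf \<Rightarrow> ('w \<Rightarrow> 'y) \<Rightarrow> ('w \<Rightarrow> 'x) \<Rightarrow> bool" where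
  "determines M Y X \<longleftrightarrow> (\<forall>\<omega>\<in>set_pmf M. \<forall>\<omega>'\<in>set_pmf M. Y \<omega> = Y \<omega>' \<longrightarrow> X \<omega> = X \<omega>')"

lemma determinesI:
  "(\<And>\<omega> \<omega>'. \<omega> \<in> set_pmf M \<Longrightarrow> \<omega>' \<in> set_pmf M \<Longrightarrow> Y \<omega> = Y \<omega>' \<Longrightarrow> X \<omega> = X \<omega>')
    \<Longrightarrow> determines M Y X"
  unfolding determines_def by blast

lemma determinesD:
  "determines M Y X \<Longrightarrow> \<omega> \<in> set_pmf M \<Longrightarrow> \<omega>' \<in> set_pmf M \<Longrightarrow> Y \<omega> = Y \<omega>' \<Longrightarrow> X \<omega> = X \<omega>'"
  unfolding determines_def by blast

definition level_prob :: "'w pmf \<Rightarrow> ('w \<Rightarrow> 'x) \<Rightarrow> 'w \<Rightarrow> real" where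
  "level_prob M X \<omega> = measure_pmf.prob M (X -` {X \<omega>})"

lemma level_prob_pos: "\<omega> \<in> set_pmf M \<Longrightarrow> 0 < level_prob M X \<omega>"
  unfolding level_prob_def by (rule measure_pmf_posI[of \<omega>]) auto

lemma level_prob_mono:
  assumes "determines M Y X" and "\<omega> \<in> set_pmf M"
  shows "level_prob M Y \<omega> \<le> level_prob M X \<omega>"
proof -
  have "level_prob M Y \<omega> = measure_pmf.prob M (Y -` {Y \<omega>} \<inter> set_pmf M)"
    by (simp add: level_prob_def measure_Int_set_pmf)
  also have "\<dots> \<le> measure_pmf.prob M (X -` {X \<omega>})"
    using assms by (intro measure_pmf.finite_measure_mono) (auto dest: determinesD)
  finally show ?thesis by (simp add: level_prob_def)
qed

lemma sum_image_eq_sum_pmf: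
  assumes "finite (set_pmf M)"
  shows "(\<Sum>x\<in>X ` set_pmf M. measure_pmf.prob M (X -` {x}) * g x)
       = (\<Sum>\<omega>\<in>set_pmf M. pmf M \<omega> * g (X \<omega>))"
proof -
  have "measure_pmf.prob M (X -` {x}) = (\<Sum>\<omega>\<in>{\<omega>\<in>set_pmf M. X \<omega> = x}. pmf M \<omega>)" for x
  proof -
    have "measure_pmf.prob M (X -` {x}) = measure_pmf.prob M (X -` {x} \<inter> set_pmf M)"
      by (simp add: measure_Int_set_pmf)
    also have "X -` {x} \<inter> set_pmf M = {\<omega>\<in>set_pmf M. X \<omega> = x}" by auto
    finally show ?thesis using assms by (simp add: measure_measure_pmf_finite)
  qed
  then show ?thesis
    using sum.image_gen[OF assms, of "\<lambda>\<omega>. pmf M \<omega> * g (X \<omega>)" X]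
    by (simp add: sum_distrib_right)
qed

text \<open>The information measures of HOL-Probability require simple functions; restricted to the
  support of a finite pmf, every random variable is one.\<close>

lemma space_restrict_set_pmf: "space (restrict_space (measure_pmf M) (set_pmf M)) = set_pmf M"
  by (simp add: space_restrict_space)

lemma information_space_restrict_set_pmf:
  "1 < b \<Longrightarrow> information_space (restrict_space (measure_pmf M) (set_pmf M)) b"
  unfolding information_space_def information_space_axioms_def
  by (auto intro: prob_space_restrict_space simp: emeasure_pmf)

lemma simple_distributed_restrict_set_pmf:
  assumes "finite (set_pmf M)"
  shows "simple_distributed (restrict_space (measure_pmf M) (set_pmf M)) X
           (\<lambda>x. measure_pmf.prob M (X -` {x}))"
proof -
  let ?N = "restrict_space (measure_pmf M) (set_pmf M)"
  have "prob_space ?N" by (auto intro: prob_space_restrict_space simp: emeasure_pmf)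
  moreover have "simple_function ?N X"
    using assms by (auto simp: simple_function_def space_restrict_set_pmf sets_restrict_space)
  moreover have "measure_pmf.prob M (X -` {x}) = measure ?N (X -` {x} \<inter> space ?N)" for x
    by (simp add: space_restrict_set_pmf measure_restrict_space measure_Int_set_pmf)
  ultimately show ?thesis by (intro prob_space.simple_distributedI) auto
qed

text \<open>Entropy is the expected surprise \<open>-log P(X = X \<omega>)\<close>; in this form monotonicity under
  functional dependence is a pointwise statement.\<close>

lemma ent_eq_sum_level_prob:
  assumes "finite (set_pmf M)"
  shows "ent b M X = - (\<Sum>\<omega>\<in>set_pmf M. pmf M \<omega> * log b (level_prob M X \<omega>))"
  using sum_image_eq_sum_pmf[OF assms, of X "\<lambda>x. log b (measure_pmf.prob M (X -` {x}))"]
  by (simp add: ent_def pmf_entropy_def pmf_map level_prob_def)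

context
  fixes b :: real and M :: "'w pmf"
  assumes finite_M: "finite (set_pmf M)" and base: "1 < b"
begin

lemma ent_nonneg: "0 \<le> ent b M X"
proof -
  have "log b (level_prob M X \<omega>) \<le> 0" if "\<omega> \<in> set_pmf M" for \<omega>
    using level_prob_pos[OF that, of X] base by (simp add: level_prob_def)
  then show ?thesis
    by (auto simp: ent_eq_sum_level_prob[OF finite_M] intro!: sum_nonpos mult_nonneg_nonpos)
qed

lemma ent_mono:
  assumes "determines M Y X"
  shows "ent b M X \<le> ent b M Y"
proof -
  have "log b (level_prob M Y \<omega>) \<le> log b (level_prob M X \<omega>)" if "\<omega> \<in> set_pmf M" for \<omega>
    using level_prob_mono[OF assms that] level_prob_pos[OF that, of Y] base by simp
  then show ?thesis
    by (auto simp: ent_eq_sum_level_prob[OF finite_M] intro!: sum_mono mult_left_mono)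
qed

lemma ent_cong:
  assumes "determines M Y X" and "determines M X Y"
  shows "ent b M X = ent b M Y"
  using ent_mono[OF assms(1)] ent_mono[OF assms(2)] by (rule antisym)

lemma ent_le_log_card: "ent b M X \<le> log b (card (X ` set_pmf M))"
proof -
  let ?N = "restrict_space (measure_pmf M) (set_pmf M)"
  interpret N: information_space ?N b by (rule information_space_restrict_set_pmf[OF base])
  note X = simple_distributed_restrict_set_pmf[OF finite_M, of X]
  have "ent b M X = N.entropy b (count_space (X ` space ?N)) X"
    unfolding N.entropy_simple_distributed[OF X]
    by (simp add: ent_def pmf_entropy_def pmf_map space_restrict_set_pmf)
  also have "\<dots> \<le> log b (card (X ` set_pmf M))"
    using N.entropy_le_card[OF X] by (simp add: space_restrict_set_pmf)
  finally show ?thesis .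
qed

lemma conditional_mutual_information_restrict_set_pmf:
  "prob_space.conditional_mutual_information (restrict_space (measure_pmf M) (set_pmf M)) b
     (count_space (X ` set_pmf M)) (count_space (Y ` set_pmf M)) (count_space (Z ` set_pmf M)) X Y Z
   = ent b M (\<lambda>\<omega>. (X \<omega>, Z \<omega>)) + ent b M (\<lambda>\<omega>. (Y \<omega>, Z \<omega>))
     - ent b M (\<lambda>\<omega>. (X \<omega>, Y \<omega>, Z \<omega>)) - ent b M Z"
proof -
  let ?N = "restrict_space (measure_pmf M) (set_pmf M)"
  interpret N: information_space ?N b by (rule information_space_restrict_set_pmf[OF base])
  note sd = simple_distributed_restrict_set_pmf[OF finite_M]
  let ?XYZ = "\<lambda>\<omega>. (X \<omega>, Y \<omega>, Z \<omega>)" and ?XZ = "\<lambda>\<omega>. (X \<omega>, Z \<omega>)" and ?YZ = "\<lambda>\<omega>. (Y \<omega>, Z \<omega>)"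
  let ?P = "\<lambda>V v. measure_pmf.prob M (V -` {v})"
  define G where "G t = (case t of (x, y, z) \<Rightarrow>
     log b (?P ?XYZ (x, y, z) * ?P Z z / (?P ?XZ (x, z) * ?P ?YZ (y, z))))" for t
  have "N.conditional_mutual_information b (count_space (X ` space ?N)) (count_space (Y ` space ?N))
          (count_space (Z ` space ?N)) X Y Z = (\<Sum>t\<in>?XYZ ` set_pmf M. ?P ?XYZ t * G t)"
    unfolding N.conditional_mutual_information_eq[OF sd sd sd sd]
    by (auto simp: space_restrict_set_pmf G_def intro!: sum.cong)
  also have "\<dots> = (\<Sum>\<omega>\<in>set_pmf M. pmf M \<omega> * G (?XYZ \<omega>))"
    by (rule sum_image_eq_sum_pmf[OF finite_M])
  also have "\<dots> = (\<Sum>\<omega>\<in>set_pmf M. pmf M \<omega> * (log b (level_prob M ?XYZ \<omega>)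
        + log b (level_prob M Z \<omega>) - log b (level_prob M ?XZ \<omega>) - log b (level_prob M ?YZ \<omega>)))"
  proof (intro sum.cong refl arg_cong[where f = "(*) _"])
    fix \<omega> assume "\<omega> \<in> set_pmf M"
    note pos = level_prob_pos[OF this]
    show "G (?XYZ \<omega>) = log b (level_prob M ?XYZ \<omega>) + log b (level_prob M Z \<omega>)
        - log b (level_prob M ?XZ \<omega>) - log b (level_prob M ?YZ \<omega>)"
      using pos[of ?XYZ] pos[of Z] pos[of ?XZ] pos[of ?YZ] base
      by (simp add: G_def level_prob_def log_mult log_divide)
  qed
  also have "\<dots> = ent b M ?XZ + ent b M ?YZ - ent b M ?XYZ - ent b M Z"
    by (simp add: ent_eq_sum_level_prob[OF finite_M] algebra_simps sum.distrib sum_subtractf)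
  finally show ?thesis by (simp add: space_restrict_set_pmf)
qed

lemma ent_submodular:
  "ent b M (\<lambda>\<omega>. (X \<omega>, Y \<omega>, Z \<omega>)) + ent b M Z
     \<le> ent b M (\<lambda>\<omega>. (X \<omega>, Z \<omega>)) + ent b M (\<lambda>\<omega>. (Y \<omega>, Z \<omega>))"
proof -
  let ?N = "restrict_space (measure_pmf M) (set_pmf M)"
  interpret N: information_space ?N b by (rule information_space_restrict_set_pmf[OF base])
  note sf = simple_distributed_simple_function[OF simple_distributed_restrict_set_pmf[OF finite_M]]
  show ?thesis
    using N.conditional_mutual_information_nonneg[OF sf sf sf, of X Y Z]
    by (simp add: space_restrict_set_pmf conditional_mutual_information_restrict_set_pmf)
qed

lemma ent_subadditive: "ent b M (\<lambda>\<omega>. (X \<omega>, Y \<omega>)) \<le> ent b M X + ent b M Y"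
proof -
  have "ent b M (\<lambda>\<omega>. (X \<omega>, Y \<omega>, ())) + ent b M (\<lambda>_. ())
      \<le> ent b M (\<lambda>\<omega>. (X \<omega>, ())) + ent b M (\<lambda>\<omega>. (Y \<omega>, ()))"
    by (rule ent_submodular)
  moreover have "ent b M (\<lambda>\<omega>. (X \<omega>, Y \<omega>, ())) = ent b M (\<lambda>\<omega>. (X \<omega>, Y \<omega>))"
    and "ent b M (\<lambda>\<omega>. (X \<omega>, ())) = ent b M X" and "ent b M (\<lambda>\<omega>. (Y \<omega>, ())) = ent b M Y"
    by (intro ent_cong determinesI; simp)+
  ultimately show ?thesis using ent_nonneg[of "\<lambda>_. ()"] by linarith
qed

lemma cond_ent_eq_0_if_determines:
  assumes "determines M Y X"
  shows "cond_ent b M X Y = 0"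
proof -
  have "ent b M (\<lambda>\<omega>. (X \<omega>, Y \<omega>)) = ent b M Y"
    by (intro ent_cong determinesI) (auto dest: determinesD[OF assms])
  then show ?thesis by (simp add: cond_ent_def)
qed

lemma cond_ent_le_ent: "cond_ent b M X Y \<le> ent b M X"
  using ent_subadditive[of X Y] by (simp add: cond_ent_def)

lemma cond_ent_antimono:
  assumes "determines M Y Z"
  shows "cond_ent b M X Y \<le> cond_ent b M X Z"
proof -
  have "ent b M (\<lambda>\<omega>. (X \<omega>, Y \<omega>, Z \<omega>)) + ent b M Z
      \<le> ent b M (\<lambda>\<omega>. (X \<omega>, Z \<omega>)) + ent b M (\<lambda>\<omega>. (Y \<omega>, Z \<omega>))"
    by (rule ent_submodular)
  moreover have "ent b M (\<lambda>\<omega>. (X \<omega>, Y \<omega>, Z \<omega>)) = ent b M (\<lambda>\<omega>. (X \<omega>, Y \<omega>))"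
    and "ent b M (\<lambda>\<omega>. (Y \<omega>, Z \<omega>)) = ent b M Y"
    by (intro ent_cong determinesI; auto dest: determinesD[OF assms])+
  ultimately show ?thesis by (simp add: cond_ent_def)
qed

lemma cond_ent_cong:
  assumes "determines M Y Y'" and "determines M Y' Y"
  shows "cond_ent b M X Y = cond_ent b M X Y'"
proof -
  have "ent b M (\<lambda>\<omega>. (X \<omega>, Y \<omega>)) = ent b M (\<lambda>\<omega>. (X \<omega>, Y' \<omega>))"
    by (intro ent_cong determinesI) (auto dest: determinesD[OF assms(1)] determinesD[OF assms(2)])
  then show ?thesis using ent_cong[OF assms(2,1)] by (simp add: cond_ent_def)
qed

lemma cond_ent_pair:
  "cond_ent b M (\<lambda>\<omega>. (X \<omega>, Y \<omega>)) Z = cond_ent b M Y Z + cond_ent b M X (\<lambda>\<omega>. (Y \<omega>, Z \<omega>))"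
proof -
  have "ent b M (\<lambda>\<omega>. ((X \<omega>, Y \<omega>), Z \<omega>)) = ent b M (\<lambda>\<omega>. (X \<omega>, Y \<omega>, Z \<omega>))"
    by (intro ent_cong determinesI) auto
  then show ?thesis by (simp add: cond_ent_def)
qed

lemma cond_ent_le_cond_ent_add:
  "cond_ent b M X Z \<le> cond_ent b M Y Z + cond_ent b M X (\<lambda>\<omega>. (Y \<omega>, Z \<omega>))"
proof -
  have "ent b M (\<lambda>\<omega>. (X \<omega>, Z \<omega>)) \<le> ent b M (\<lambda>\<omega>. (X \<omega>, Y \<omega>, Z \<omega>))"
    by (intro ent_mono determinesI) simp
  then show ?thesis by (simp add: cond_ent_def)
qed

lemma cond_ent_add_le_cond_ent_pair:
  "cond_ent b M X (\<lambda>\<omega>. (Y \<omega>, Z \<omega>)) + cond_ent b M Y (\<lambda>\<omega>. (X \<omega>, Z \<omega>))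
     \<le> cond_ent b M (\<lambda>\<omega>. (X \<omega>, Y \<omega>)) Z"
proof -
  have "ent b M (\<lambda>\<omega>. (X \<omega>, Y \<omega>, Z \<omega>)) + ent b M Z
      \<le> ent b M (\<lambda>\<omega>. (X \<omega>, Z \<omega>)) + ent b M (\<lambda>\<omega>. (Y \<omega>, Z \<omega>))"
    by (rule ent_submodular)
  moreover have "ent b M (\<lambda>\<omega>. (Y \<omega>, X \<omega>, Z \<omega>)) = ent b M (\<lambda>\<omega>. (X \<omega>, Y \<omega>, Z \<omega>))"
    by (intro ent_cong determinesI) auto
  ultimately show ?thesis using cond_ent_pair[of X Y Z] by (simp add: cond_ent_def)
qed

lemma mutual_info_nonneg: "0 \<le> mutual_info b M X Y"
  using ent_subadditive[of X Y] by (simp add: mutual_info_def)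

lemma mutual_info_commute: "mutual_info b M X Y = mutual_info b M Y X"
proof -
  have "ent b M (\<lambda>\<omega>. (X \<omega>, Y \<omega>)) = ent b M (\<lambda>\<omega>. (Y \<omega>, X \<omega>))"
    by (intro ent_cong determinesI) auto
  then show ?thesis by (simp add: mutual_info_def)
qed

lemma mutual_info_mono_right:
  assumes "determines M Y Y'"
  shows "mutual_info b M X Y' \<le> mutual_info b M X Y"
  using cond_ent_antimono[OF assms, of X] by (simp add: mutual_info_def cond_ent_def)

lemma mutual_info_mono:
  assumes "determines M X X'" and "determines M Y Y'"
  shows "mutual_info b M X' Y' \<le> mutual_info b M X Y"
  using mutual_info_mono_right[OF assms(1), of Y'] mutual_info_mono_right[OF assms(2), of X]
    mutual_info_commute[of X' Y'] mutual_info_commute[of X Y'] by linarith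

text \<open>The hypotheses make \<open>F \<rightarrow> Q \<rightarrow> V\<close> a Markov chain.\<close>

lemma cond_ent_eq_cond_ent_if_independent:
  assumes indep: "mutual_info b M F S = 0"
    and Q: "determines M F Q" and V: "determines M (\<lambda>\<omega>. (S \<omega>, Q \<omega>)) V"
  shows "cond_ent b M V F = cond_ent b M V Q"
proof (rule antisym)
  show "cond_ent b M V F \<le> cond_ent b M V Q" using Q by (rule cond_ent_antimono)
  have "ent b M (\<lambda>\<omega>. (F \<omega>, S \<omega>, V \<omega>, Q \<omega>)) + ent b M (\<lambda>\<omega>. (V \<omega>, Q \<omega>))
      \<le> ent b M (\<lambda>\<omega>. (F \<omega>, V \<omega>, Q \<omega>)) + ent b M (\<lambda>\<omega>. (S \<omega>, V \<omega>, Q \<omega>))"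
    by (rule ent_submodular)
  moreover have "ent b M (\<lambda>\<omega>. (F \<omega>, S \<omega>, V \<omega>, Q \<omega>)) = ent b M (\<lambda>\<omega>. (F \<omega>, S \<omega>))"
    and "ent b M (\<lambda>\<omega>. (F \<omega>, V \<omega>, Q \<omega>)) = ent b M (\<lambda>\<omega>. (V \<omega>, F \<omega>))"
    and "ent b M (\<lambda>\<omega>. (S \<omega>, V \<omega>, Q \<omega>)) = ent b M (\<lambda>\<omega>. (S \<omega>, Q \<omega>))"
    by (intro ent_cong determinesI; auto dest: determinesD[OF Q] determinesD[OF V])+
  moreover have "ent b M (\<lambda>\<omega>. (S \<omega>, Q \<omega>)) \<le> ent b M S + ent b M Q"
    by (rule ent_subadditive)
  ultimately show "cond_ent b M V Q \<le> cond_ent b M V F"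
    using indep by (simp add: cond_ent_def mutual_info_def)
qed

end

lemma ent_map_pmf: "ent b (map_pmf g M) X = ent b M (\<lambda>\<omega>. X (g \<omega>))"
  by (simp add: ent_def map_pmf_comp)

lemma mutual_info_map_pmf:
  "mutual_info b (map_pmf g M) X Y = mutual_info b M (\<lambda>\<omega>. X (g \<omega>)) (\<lambda>\<omega>. Y (g \<omega>))"
  by (simp add: mutual_info_def ent_map_pmf)

lemma pmf_entropy_pair_pmf:
  assumes "finite (set_pmf p)" and "finite (set_pmf q)"
  shows "pmf_entropy b (pair_pmf p q) = pmf_entropy b p + pmf_entropy b q"
proof -
  have "(\<Sum>z\<in>set_pmf p \<times> set_pmf q. pmf (pair_pmf p q) z * log b (pmf (pair_pmf p q) z))
      = (\<Sum>x\<in>set_pmf p. \<Sum>y\<in>set_pmf q. pmf p x * pmf q y * (log b (pmf p x) + log b (pmf q y)))"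
    by (auto simp: sum.cartesian_product pmf_pair log_mult pmf_positive intro!: sum.cong)
  also have "\<dots> = (\<Sum>x\<in>set_pmf p. pmf p x * log b (pmf p x)) * (\<Sum>y\<in>set_pmf q. pmf q y)
      + (\<Sum>x\<in>set_pmf p. pmf p x) * (\<Sum>y\<in>set_pmf q. pmf q y * log b (pmf q y))"
    by (simp add: algebra_simps sum.distrib sum_distrib_left sum_distrib_right
        sum.swap[of _ "set_pmf q"])
  also have "\<dots> = (\<Sum>x\<in>set_pmf p. pmf p x * log b (pmf p x)) + (\<Sum>y\<in>set_pmf q. pmf q y * log b (pmf q y))"
    using assms by (simp add: sum_pmf_eq_1)
  finally show ?thesis by (simp add: pmf_entropy_def)
qed

lemma pmf_entropy_pmf_of_set:
  assumes "finite A" and "A \<noteq> {}"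
  shows "pmf_entropy b (pmf_of_set A) = log b (card A)"
proof -
  have "0 < card A" using assms by (simp add: card_gt_0_iff)
  then show ?thesis using assms by (simp add: pmf_entropy_def log_divide)
qed

lemma mutual_info_pair_pmf:
  assumes "finite (set_pmf p)" and "finite (set_pmf q)"
  shows "mutual_info b (pair_pmf p q) (\<lambda>\<omega>. X (fst \<omega>)) (\<lambda>\<omega>. Y (snd \<omega>)) = 0"
proof -
  have "map_pmf (\<lambda>\<omega>. (X (fst \<omega>), Y (snd \<omega>))) (pair_pmf p q) = pair_pmf (map_pmf X p) (map_pmf Y q)"
    using map_pair[of X Y p q] by (simp add: case_prod_beta')
  then have "ent b (pair_pmf p q) (\<lambda>\<omega>. (X (fst \<omega>), Y (snd \<omega>))) = ent b p X + ent b q Y"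
    using assms by (simp add: ent_def pmf_entropy_pair_pmf)
  moreover have "ent b (pair_pmf p q) (\<lambda>\<omega>. X (fst \<omega>)) = ent b p X"
    using ent_map_pmf[of b fst "pair_pmf p q" X] by (simp add: map_fst_pair_pmf)
  moreover have "ent b (pair_pmf p q) (\<lambda>\<omega>. Y (snd \<omega>)) = ent b q Y"
    using ent_map_pmf[of b snd "pair_pmf p q" Y] by (simp add: map_snd_pair_pmf)
  ultimately show ?thesis by (simp add: mutual_info_def)
qed

section \<open>The converse for two servers\<close>

lemma card_msgs: "card (msgs K L :: (nat \<Rightarrow> nat \<Rightarrow> 'a::finite) set) = CARD('a) ^ (K * L)"
  by (simp add: msgs_def card_PiE flip: power_mult) (simp add: mult.commute)

lemma finite_msgs: "finite (msgs K L :: (nat \<Rightarrow> nat \<Rightarrow> 'a::finite) set)"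
  by (simp add: msgs_def finite_PiE)

lemma msgs_nonempty: "msgs K L \<noteq> {}"
  by (simp add: msgs_def PiE_eq_empty_iff)

lemma msgs_component: "W \<in> msgs K L \<Longrightarrow> j < K \<Longrightarrow> W j \<in> (\<Pi>\<^sub>E l\<in>{..<L}. UNIV)"
  unfolding msgs_def by (auto dest: PiE_mem)

lemma msgs_eqI: "W \<in> msgs K L \<Longrightarrow> W' \<in> msgs K L \<Longrightarrow> (\<And>j. j < K \<Longrightarrow> W j = W' j) \<Longrightarrow> W = W'"
  unfolding msgs_def by (rule PiE_ext) auto

lemma set_other_msgs: "set (other_msgs K k W) = W ` ({..<K} - {k})"
  by (auto simp: other_msgs_def)

lemma other_msgs_eq_iff:
  "other_msgs K k W = other_msgs K k W' \<longleftrightarrow> (\<forall>j<K. j \<noteq> k \<longrightarrow> W j = W' j)"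
  by (auto simp: other_msgs_def)

lemma length_other_msgs: "k < K \<Longrightarrow> length (other_msgs K k W) = K - 1"
proof -
  assume "k < K"
  have "{i. i < K \<and> [0..<K] ! i \<noteq> k} = {..<K} - {k}" by auto
  then show ?thesis using \<open>k < K\<close> by (simp add: other_msgs_def length_filter_conv_card)
qed

lemma answers_two: "answers 2 qry ans k \<omega> = [answer qry ans 0 k \<omega>, answer qry ans 1 k \<omega>]"
  by (simp add: answers_def numeral_2_eq_2 upt_rec)

lemma card_field_gt_1: "1 < real CARD('a::{finite,field})"
proof -
  have "card {0::'a, 1} \<le> CARD('a)" by (rule card_mono) auto
  then show ?thesis by simp
qed

locale spir_model =
  fixes K L :: nat and pF :: "'f pmf" and pR :: "'r pmf" and field :: "'a::{finite,field} itself"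
  assumes finite_user_randomness: "finite (set_pmf pF)"
    and finite_common_randomness: "finite (set_pmf pR)"
begin

abbreviation \<Omega> :: "((nat \<Rightarrow> nat \<Rightarrow> 'a) \<times> 'f \<times> 'r) pmf" where
  "\<Omega> \<equiv> spir_space K L pF pR"

abbreviation W :: "(nat \<Rightarrow> nat \<Rightarrow> 'a) \<times> 'f \<times> 'r \<Rightarrow> nat \<Rightarrow> nat \<Rightarrow> 'a" where
  "W \<equiv> fst"

abbreviation F :: "(nat \<Rightarrow> nat \<Rightarrow> 'a) \<times> 'f \<times> 'r \<Rightarrow> 'f" where
  "F \<omega> \<equiv> fst (snd \<omega>)"

abbreviation R :: "(nat \<Rightarrow> nat \<Rightarrow> 'a) \<times> 'f \<times> 'r \<Rightarrow> 'r" where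
  "R \<omega> \<equiv> snd (snd \<omega>)"

abbreviation H :: "((nat \<Rightarrow> nat \<Rightarrow> 'a) \<times> 'f \<times> 'r \<Rightarrow> 'x) \<Rightarrow> real" where
  "H \<equiv> ent (real CARD('a)) \<Omega>"

abbreviation Hc :: "((nat \<Rightarrow> nat \<Rightarrow> 'a) \<times> 'f \<times> 'r \<Rightarrow> 'x)
    \<Rightarrow> ((nat \<Rightarrow> nat \<Rightarrow> 'a) \<times> 'f \<times> 'r \<Rightarrow> 'y) \<Rightarrow> real" where
  "Hc \<equiv> cond_ent (real CARD('a)) \<Omega>"

abbreviation I :: "((nat \<Rightarrow> nat \<Rightarrow> 'a) \<times> 'f \<times> 'r \<Rightarrow> 'x)
    \<Rightarrow> ((nat \<Rightarrow> nat \<Rightarrow> 'a) \<times> 'f \<times> 'r \<Rightarrow> 'y) \<Rightarrow> real" where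
  "I \<equiv> mutual_info (real CARD('a)) \<Omega>"

lemma log_base_gt_1: "1 < real CARD('a)"
  by (rule card_field_gt_1)

lemma set_pmf_\<Omega>: "set_pmf \<Omega> = msgs K L \<times> set_pmf pF \<times> set_pmf pR"
  by (simp add: spir_space_def finite_msgs msgs_nonempty)

lemma finite_message_distribution: "finite (set_pmf (pmf_of_set (msgs K L :: (nat \<Rightarrow> nat \<Rightarrow> 'a) set)))"
  by (simp add: finite_msgs msgs_nonempty)

lemma finite_\<Omega>: "finite (set_pmf \<Omega>)"
  by (simp add: set_pmf_\<Omega> finite_msgs finite_user_randomness finite_common_randomness)

lemmas H_mono = ent_mono[OF finite_\<Omega> log_base_gt_1]
  and H_cong = ent_cong[OF finite_\<Omega> log_base_gt_1]
  and H_subadditive = ent_subadditive[OF finite_\<Omega> log_base_gt_1]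
  and H_le_log_card = ent_le_log_card[OF finite_\<Omega> log_base_gt_1]
  and Hc_le_H = cond_ent_le_ent[OF finite_\<Omega> log_base_gt_1]
  and Hc_cong = cond_ent_cong[OF finite_\<Omega> log_base_gt_1]
  and Hc_pair = cond_ent_pair[OF finite_\<Omega> log_base_gt_1]
  and Hc_le_Hc_add = cond_ent_le_cond_ent_add[OF finite_\<Omega> log_base_gt_1]
  and Hc_add_le_Hc_pair = cond_ent_add_le_cond_ent_pair[OF finite_\<Omega> log_base_gt_1]
  and Hc_eq_Hc_if_independent = cond_ent_eq_cond_ent_if_independent[OF finite_\<Omega> log_base_gt_1]
  and I_nonneg = mutual_info_nonneg[OF finite_\<Omega> log_base_gt_1]
  and I_mono = mutual_info_mono[OF finite_\<Omega> log_base_gt_1]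

lemma H_le_of_range:
  assumes "X ` set_pmf \<Omega> \<subseteq> A" and "finite A" and "card A = CARD('a) ^ n"
  shows "H X \<le> n"
proof -
  have "0 < card (X ` set_pmf \<Omega>)"
    using finite_\<Omega> by (simp add: card_gt_0_iff set_pmf_not_empty)
  moreover have "card (X ` set_pmf \<Omega>) \<le> card A" using assms by (intro card_mono)
  ultimately have "log (real CARD('a)) (card (X ` set_pmf \<Omega>)) \<le> log (real CARD('a)) (card A)"
    using log_base_gt_1 by simp
  also have "\<dots> = n" using log_base_gt_1 assms(3) by (simp add: log_nat_power)
  finally show ?thesis using H_le_log_card[of X] by linarith
qed

lemma H_messages: "H W = K * L"
proof -
  have "H W = pmf_entropy (real CARD('a)) (pmf_of_set (msgs K L :: (nat \<Rightarrow> nat \<Rightarrow> 'a) set))"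
    using ent_map_pmf[of _ fst \<Omega> id] by (simp add: spir_space_def map_fst_pair_pmf ent_def)
  also have "\<dots> = K * L"
    using log_base_gt_1
    by (simp add: pmf_entropy_pmf_of_set finite_msgs msgs_nonempty card_msgs log_nat_power)
  finally show ?thesis .
qed

lemma H_common_randomness: "H R = pmf_entropy (real CARD('a)) pR"
proof -
  have "map_pmf R \<Omega> = pR"
    by (simp add: spir_space_def map_pmf_comp[symmetric] map_snd_pair_pmf)
  then show ?thesis by (simp add: ent_def)
qed

lemma user_randomness_independent: "I F (\<lambda>\<omega>. (W \<omega>, R \<omega>)) = 0"
proof -
  let ?swap = "\<lambda>\<omega>. (F \<omega>, W \<omega>, R \<omega>)"
  let ?pWR = "pair_pmf (pmf_of_set (msgs K L :: (nat \<Rightarrow> nat \<Rightarrow> 'a) set)) pR"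
  have "map_pmf ?swap \<Omega> = pair_pmf pF ?pWR"
    unfolding spir_space_def map_pmf_def pair_pmf_def
    by (simp add: bind_assoc_pmf bind_return_pmf; rule bind_commute_pmf)
  moreover have "finite (set_pmf ?pWR)"
    using finite_message_distribution finite_common_randomness by simp
  ultimately show ?thesis
    using mutual_info_map_pmf[of _ ?swap \<Omega> fst snd]
      mutual_info_pair_pmf[of pF ?pWR "real CARD('a)" id id] finite_user_randomness
    by simp
qed

lemma messages_independent_common_randomness: "I W R = 0"
proof -
  have "finite (set_pmf (pair_pmf pF pR))"
    using finite_user_randomness finite_common_randomness by simp
  then show ?thesis
    using mutual_info_pair_pmf[of "pmf_of_set (msgs K L :: (nat \<Rightarrow> nat \<Rightarrow> 'a) set)" "pair_pmf pF pR"
        "real CARD('a)" id snd] finite_message_distribution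
    by (simp add: spir_space_def)
qed

lemma messages_in_msgs: "\<omega> \<in> set_pmf \<Omega> \<Longrightarrow> W \<omega> \<in> msgs K L"
  by (auto simp: set_pmf_\<Omega>)

lemma H_message_le: "j < K \<Longrightarrow> H (\<lambda>\<omega>. W \<omega> j) \<le> L"
  by (rule H_le_of_range[where A = "\<Pi>\<^sub>E l\<in>{..<L}. UNIV"])
    (use msgs_component[OF messages_in_msgs] in \<open>force simp: finite_PiE card_PiE\<close>)+

lemma H_other_msgs_le: "k < K \<Longrightarrow> H (\<lambda>\<omega>. other_msgs K k (W \<omega>)) \<le> (K - 1) * L"
proof (rule H_le_of_range[where A = "{xs. set xs \<subseteq> (\<Pi>\<^sub>E l\<in>{..<L}. UNIV) \<and> length xs = K - 1}"])
  show "(\<lambda>\<omega>. other_msgs K k (W \<omega>)) ` set_pmf \<Omega>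
      \<subseteq> {xs. set xs \<subseteq> (\<Pi>\<^sub>E l\<in>{..<L}. UNIV) \<and> length xs = K - 1}" if "k < K"
  proof (intro image_subsetI CollectI conjI)
    fix \<omega> assume "\<omega> \<in> set_pmf \<Omega>"
    then show "set (other_msgs K k (W \<omega>)) \<subseteq> (\<Pi>\<^sub>E l\<in>{..<L}. UNIV)"
      unfolding set_other_msgs using msgs_component[OF messages_in_msgs] by blast
    show "length (other_msgs K k (W \<omega>)) = K - 1" using that by (rule length_other_msgs)
  qed
qed (simp_all add: finite_lists_length_eq finite_PiE card_lists_length_eq card_PiE
      flip: power_mult, simp add: mult.commute)

lemma H_messages_le:
  assumes "j < K"
  shows "H W \<le> H (\<lambda>\<omega>. W \<omega> j) + H (\<lambda>\<omega>. other_msgs K j (W \<omega>))"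
proof -
  have "determines \<Omega> (\<lambda>\<omega>. (W \<omega> j, other_msgs K j (W \<omega>))) W"
  proof (rule determinesI)
    fix \<omega> \<omega>' assume \<omega>: "\<omega> \<in> set_pmf \<Omega>" "\<omega>' \<in> set_pmf \<Omega>"
      and eq: "(W \<omega> j, other_msgs K j (W \<omega>)) = (W \<omega>' j, other_msgs K j (W \<omega>'))"
    show "W \<omega> = W \<omega>'"
    proof (rule msgs_eqI[OF messages_in_msgs[OF \<omega>(1)] messages_in_msgs[OF \<omega>(2)]])
      show "W \<omega> i = W \<omega>' i" if "i < K" for i
        using eq that by (cases "i = j") (auto simp: other_msgs_eq_iff)
    qed
  qed
  then have "H W \<le> H (\<lambda>\<omega>. (W \<omega> j, other_msgs K j (W \<omega>)))" by (rule H_mono)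
  then show ?thesis using H_subadditive by (rule order_trans)
qed

lemma H_message: "j < K \<Longrightarrow> H (\<lambda>\<omega>. W \<omega> j) = L"
proof (rule antisym[OF H_message_le])
  assume j: "j < K"
  have "real (K * L) = real ((K - 1) * L) + L"
    using j by (cases K) (simp_all add: algebra_simps)
  then show "L \<le> H (\<lambda>\<omega>. W \<omega> j)"
    using H_messages_le[OF j] H_messages H_other_msgs_le[OF j] by linarith
qed

end

locale two_server_spir = spir_model K L pF pR "TYPE('a::{finite,field})"
  for K L :: nat and pF :: "'f pmf" and pR :: "'r pmf" +
  fixes qry :: "nat \<Rightarrow> nat \<Rightarrow> 'f \<Rightarrow> 'q"
    and ans :: "nat \<Rightarrow> 'q \<Rightarrow> (nat \<Rightarrow> nat \<Rightarrow> 'a::{finite,field}) \<Rightarrow> 'r \<Rightarrow> 'b"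
  assumes two_messages: "1 < K"
    and scheme: "spir_scheme 2 K L pF pR qry ans"
begin

abbreviation A :: "nat \<Rightarrow> nat \<Rightarrow> (nat \<Rightarrow> nat \<Rightarrow> 'a) \<times> 'f \<times> 'r \<Rightarrow> 'b" where
  "A \<equiv> answer qry ans"

abbreviation Q :: "nat \<Rightarrow> nat \<Rightarrow> (nat \<Rightarrow> nat \<Rightarrow> 'a) \<times> 'f \<times> 'r \<Rightarrow> 'q" where
  "Q \<equiv> query qry"

lemma reliability: "k < K \<Longrightarrow> Hc (\<lambda>\<omega>. W \<omega> k) (\<lambda>\<omega>. (F \<omega>, answers 2 qry ans k \<omega>)) = 0"
  and user_privacy: "n < 2 \<Longrightarrow> k < K \<Longrightarrow> k' < K \<Longrightarrow>
    map_pmf (\<lambda>\<omega>. (Q n k \<omega>, A n k \<omega>, W \<omega>, R \<omega>)) \<Omega> =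
    map_pmf (\<lambda>\<omega>. (Q n k' \<omega>, A n k' \<omega>, W \<omega>, R \<omega>)) \<Omega>"
  and database_privacy: "k < K \<Longrightarrow>
    I (\<lambda>\<omega>. other_msgs K k (W \<omega>)) (\<lambda>\<omega>. (F \<omega>, answers 2 qry ans k \<omega>)) = 0"
  using scheme unfolding spir_scheme_def Let_def by blast+

text \<open>Database privacy for message 1 hides \<open>W 0\<close> from one database's view in the retrieval of
  message 1, and user privacy makes that view equally distributed in the retrieval of message 0.\<close>

lemma view_independent_first_message:
  assumes "n < 2"
  shows "I (\<lambda>\<omega>. W \<omega> 0) (\<lambda>\<omega>. (A n 0 \<omega>, Q n 0 \<omega>)) = 0"
proof -
  let ?view = "\<lambda>k \<omega>. (Q n k \<omega>, A n k \<omega>, W \<omega>, R \<omega>)"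
  have "I (\<lambda>\<omega>. W \<omega> 0) (\<lambda>\<omega>. (A n k \<omega>, Q n k \<omega>))
      = mutual_info (real CARD('a)) (map_pmf (?view k) \<Omega>) (\<lambda>(q, a, w, r). w 0) (\<lambda>(q, a, w, r). (a, q))"
    for k by (simp add: mutual_info_map_pmf)
  then have "I (\<lambda>\<omega>. W \<omega> 0) (\<lambda>\<omega>. (A n 0 \<omega>, Q n 0 \<omega>)) = I (\<lambda>\<omega>. W \<omega> 0) (\<lambda>\<omega>. (A n 1 \<omega>, Q n 1 \<omega>))"
    using user_privacy[OF assms, of 0 1] two_messages by simp
  also have "\<dots> \<le> I (\<lambda>\<omega>. other_msgs K 1 (W \<omega>)) (\<lambda>\<omega>. (F \<omega>, answers 2 qry ans 1 \<omega>))"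
  proof (intro I_mono determinesI)
    fix \<omega> \<omega>' :: "(nat \<Rightarrow> nat \<Rightarrow> 'a) \<times> 'f \<times> 'r"
    show "other_msgs K 1 (W \<omega>) = other_msgs K 1 (W \<omega>') \<Longrightarrow> W \<omega> 0 = W \<omega>' 0"
      using two_messages unfolding other_msgs_eq_iff by (metis less_trans zero_less_one zero_neq_one)
    assume "(F \<omega>, answers 2 qry ans 1 \<omega>) = (F \<omega>', answers 2 qry ans 1 \<omega>')"
    then have "F \<omega> = F \<omega>'" and "A 0 1 \<omega> = A 0 1 \<omega>'" and "A 1 1 \<omega> = A 1 1 \<omega>'"
      by (simp_all add: answers_two)
    moreover have "n = 0 \<or> n = 1" using assms by linarith
    ultimately show "(A n 1 \<omega>, Q n 1 \<omega>) = (A n 1 \<omega>', Q n 1 \<omega>')"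
      by (auto simp: query_def)
  qed
  also have "\<dots> = 0" using database_privacy two_messages by simp
  finally show ?thesis using I_nonneg[of "\<lambda>\<omega>. W \<omega> 0" "\<lambda>\<omega>. (A n 0 \<omega>, Q n 0 \<omega>)"] by linarith
qed

lemma answer_hides_first_message:
  assumes "n < 2"
  shows "Hc (\<lambda>\<omega>. W \<omega> 0) (\<lambda>\<omega>. (A n 0 \<omega>, F \<omega>)) = L"
proof -
  have query: "determines \<Omega> F (Q n 0)"
    by (rule determinesI) (simp add: query_def)
  have "determines \<Omega> (\<lambda>\<omega>. ((W \<omega>, R \<omega>), Q n 0 \<omega>)) (\<lambda>\<omega>. (W \<omega> 0, A n 0 \<omega>))"
    and "determines \<Omega> (\<lambda>\<omega>. ((W \<omega>, R \<omega>), Q n 0 \<omega>)) (A n 0)"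
    by (auto intro!: determinesI simp: answer_def)
  then have "Hc (\<lambda>\<omega>. (W \<omega> 0, A n 0 \<omega>)) F = Hc (\<lambda>\<omega>. (W \<omega> 0, A n 0 \<omega>)) (Q n 0)"
    and "Hc (A n 0) F = Hc (A n 0) (Q n 0)"
    by (auto intro!: Hc_eq_Hc_if_independent[OF user_randomness_independent query])
  then have "Hc (\<lambda>\<omega>. W \<omega> 0) (\<lambda>\<omega>. (A n 0 \<omega>, F \<omega>))
      = Hc (\<lambda>\<omega>. W \<omega> 0) (\<lambda>\<omega>. (A n 0 \<omega>, Q n 0 \<omega>))"
    using Hc_pair[of "\<lambda>\<omega>. W \<omega> 0" "A n 0" F] Hc_pair[of "\<lambda>\<omega>. W \<omega> 0" "A n 0" "Q n 0"] by simp
  also have "\<dots> = H (\<lambda>\<omega>. W \<omega> 0)"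
    using view_independent_first_message[OF assms] by (simp add: mutual_info_def cond_ent_def)
  also have "\<dots> = L" using two_messages by (simp add: H_message)
  finally show ?thesis .
qed

lemma answer_carries_first_message:
  assumes "n < 2"
  shows "L \<le> Hc (A n 0) (\<lambda>\<omega>. (A (1 - n) 0 \<omega>, F \<omega>))"
proof -
  let ?m = "1 - n"
  have "Hc (\<lambda>\<omega>. W \<omega> 0) (\<lambda>\<omega>. (A n 0 \<omega>, A ?m 0 \<omega>, F \<omega>))
      = Hc (\<lambda>\<omega>. W \<omega> 0) (\<lambda>\<omega>. (F \<omega>, answers 2 qry ans 0 \<omega>))"
    using assms by (intro Hc_cong determinesI) (auto simp: answers_two less_2_cases_iff)
  also have "\<dots> = 0" using reliability two_messages by simp
  finally have "Hc (\<lambda>\<omega>. W \<omega> 0) (\<lambda>\<omega>. (A n 0 \<omega>, A ?m 0 \<omega>, F \<omega>)) = 0" .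
  moreover have "L = Hc (\<lambda>\<omega>. W \<omega> 0) (\<lambda>\<omega>. (A ?m 0 \<omega>, F \<omega>))"
    using answer_hides_first_message[of ?m] by simp
  ultimately show ?thesis
    using Hc_le_Hc_add[of "\<lambda>\<omega>. W \<omega> 0" "\<lambda>\<omega>. (A ?m 0 \<omega>, F \<omega>)" "A n 0"] by simp
qed

lemma download_per_server_ge:
  assumes "n < 2"
  shows "L \<le> log (real CARD('a)) (card {A n k \<omega> | k \<omega>. k < K \<and> \<omega> \<in> set_pmf \<Omega>})"
proof -
  let ?D = "{A n k \<omega> | k \<omega>. k < K \<and> \<omega> \<in> set_pmf \<Omega>}"
  have "?D = (\<lambda>(k, \<omega>). A n k \<omega>) ` ({..<K} \<times> set_pmf \<Omega>)" by auto
  then have "finite ?D" using finite_\<Omega> by simp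
  moreover have "A n 0 ` set_pmf \<Omega> \<subseteq> ?D"
  proof -
    have "0 < K" using two_messages by simp
    then show ?thesis by blast
  qed
  ultimately have "card (A n 0 ` set_pmf \<Omega>) \<le> card ?D" by (rule card_mono)
  moreover have "0 < card (A n 0 ` set_pmf \<Omega>)"
    using finite_\<Omega> by (simp add: card_gt_0_iff set_pmf_not_empty)
  ultimately have "log (real CARD('a)) (card (A n 0 ` set_pmf \<Omega>)) \<le> log (real CARD('a)) (card ?D)"
    using log_base_gt_1 by simp
  moreover have "L \<le> H (A n 0)"
    using answer_carries_first_message[OF assms] Hc_le_H by (rule order_trans)
  ultimately show ?thesis using H_le_log_card[of "A n 0"] by linarith
qed

lemma Hc_answers_le:
  "Hc (\<lambda>\<omega>. (A 0 0 \<omega>, A 1 0 \<omega>)) F \<le> L + H R"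
proof -
  let ?view = "\<lambda>\<omega>. (F \<omega>, answers 2 qry ans 0 \<omega>)"
  let ?others = "\<lambda>\<omega>. other_msgs K 0 (W \<omega>)"
  have "H (\<lambda>\<omega>. ((A 0 0 \<omega>, A 1 0 \<omega>), F \<omega>)) = H ?view"
    by (intro H_cong determinesI) (auto simp: answers_two)
  also have "\<dots> = H (\<lambda>\<omega>. (?others \<omega>, ?view \<omega>)) - H ?others"
    using database_privacy[of 0] two_messages by (simp add: mutual_info_def)
  also have "H (\<lambda>\<omega>. (?others \<omega>, ?view \<omega>)) \<le> H (\<lambda>\<omega>. (F \<omega>, W \<omega>, R \<omega>))"
    by (intro H_mono determinesI) (auto simp: answers_def answer_def query_def)
  also have "\<dots> = H F + H W + H R"
    using user_randomness_independent messages_independent_common_randomness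
    by (simp add: mutual_info_def)
  also have "H W \<le> L + H ?others"
    using H_messages_le[of 0] H_message_le[of 0] two_messages by simp
  finally show ?thesis by (simp add: cond_ent_def)
qed

lemma common_randomness_ge: "L \<le> H R"
proof -
  have "2 * L \<le> Hc (A 0 0) (\<lambda>\<omega>. (A 1 0 \<omega>, F \<omega>)) + Hc (A 1 0) (\<lambda>\<omega>. (A 0 0 \<omega>, F \<omega>))"
    using answer_carries_first_message[of 0] answer_carries_first_message[of 1] by simp
  also have "\<dots> \<le> Hc (\<lambda>\<omega>. (A 0 0 \<omega>, A 1 0 \<omega>)) F" by (rule Hc_add_le_Hc_pair)
  also have "\<dots> \<le> L + H R" by (rule Hc_answers_le)
  finally show ?thesis by simp
qed

end

lemma two_server_spir_converse:
  fixes pF :: "'f pmf" and pR :: "'r pmf" and qry :: "nat \<Rightarrow> nat \<Rightarrow> 'f \<Rightarrow> 'q"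
    and ans :: "nat \<Rightarrow> 'q \<Rightarrow> (nat \<Rightarrow> nat \<Rightarrow> 'a::{finite,field}) \<Rightarrow> 'r \<Rightarrow> 'b"
  assumes "spir_scheme 2 K L pF pR qry ans" and "1 < K"
  shows "2 * real L \<le> download_cost 2 K L pF pR qry ans"
    and "real L \<le> pmf_entropy (real CARD('a)) pR"
proof -
  interpret two_server_spir K L pF pR qry ans
  proof
    show "finite (set_pmf pF)" and "finite (set_pmf pR)"
      using assms(1) unfolding spir_scheme_def Let_def by blast+
  qed (fact assms)+
  show "2 * real L \<le> download_cost 2 K L pF pR qry ans"
    using download_per_server_ge[of 0] download_per_server_ge[of 1]
    by (simp add: download_cost_def numeral_2_eq_2)
  show "real L \<le> pmf_entropy (real CARD('a)) pR"
    using common_randomness_ge H_common_randomness by simp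
qed

section \<open>A scheme meeting the bounds\<close>

text \<open>Queries are subsets of the three message indices, encoded as bit masks; \<open>even_masks\<close> are the
  subsets of even size.\<close>

definition even_masks :: "nat set" where
  "even_masks = {0, 3, 5, 6}"

definition mask_query :: "nat \<Rightarrow> nat \<Rightarrow> nat \<Rightarrow> nat" where
  "mask_query n k f = (if n = 0 then f else xor f (2 ^ k))"

definition mask_sum :: "nat \<Rightarrow> (nat \<Rightarrow> nat \<Rightarrow> 'a::comm_monoid_add) \<Rightarrow> nat \<Rightarrow> 'a" where
  "mask_sum q W l = (\<Sum>j | j < 3 \<and> bit q j. W j l)"

definition padded_answer :: "nat \<Rightarrow> (nat \<Rightarrow> nat \<Rightarrow> 'a::ring) \<Rightarrow> 'a list \<Rightarrow> 'a list" where
  "padded_answer q W Rs = map (\<lambda>l. mask_sum q W l + Rs ! l) [0..<length Rs]"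

lemma mask_sum_toggle:
  fixes W :: "nat \<Rightarrow> nat \<Rightarrow> 'a::ab_group_add"
  assumes "k < 3"
  shows "mask_sum (xor q (2 ^ k)) W l
    = (if bit q k then mask_sum q W l - W k l else mask_sum q W l + W k l)"
proof -
  let ?S = "{j. j < 3 \<and> bit q j}"
  have fin: "finite ?S" by simp
  have "{j. j < 3 \<and> bit (xor q (2 ^ k)) j} = (if bit q k then ?S - {k} else insert k ?S)"
    using assms by (auto simp: bit_xor_iff bit_exp_iff)
  then show ?thesis
    using assms by (simp add: mask_sum_def sum_diff1 sum.insert[OF fin])
qed

lemma mask_query_range:
  "n < 2 \<Longrightarrow> {mask_query n k f | k f. k < 3 \<and> f \<in> even_masks}
     = (if n = 0 then even_masks else {1, 2, 4, 7})"
proof -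
  assume "n < 2"
  have "{mask_query n k f | k f. k < 3 \<and> f \<in> even_masks} = (\<Union>k\<in>{..<3}. mask_query n k ` even_masks)"
    by blast
  also have "{..<3::nat} = {0, 1, 2}" by auto
  finally show ?thesis
    using \<open>n < 2\<close> by (auto simp: mask_query_def even_masks_def)
qed

lemma map_mask_query_even_masks:
  assumes "k < 3"
  shows "map_pmf (mask_query n k) (pmf_of_set even_masks) = map_pmf (mask_query n 0) (pmf_of_set even_masks)"
proof -
  have k: "k \<in> {0, 1, 2}" using assms by auto
  have inj: "inj_on (mask_query n j) even_masks" if "j \<in> {0, 1, 2}" for j
    using that by (auto simp: mask_query_def even_masks_def)
  have "map_pmf (mask_query n k) (pmf_of_set even_masks) = pmf_of_set (mask_query n k ` even_masks)"
    using inj[OF k] by (rule map_pmf_of_set_inj) (simp_all add: even_masks_def)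
  also have "mask_query n k ` even_masks = mask_query n 0 ` even_masks"
    using k by (auto simp: mask_query_def even_masks_def)
  also have "pmf_of_set \<dots> = map_pmf (mask_query n 0) (pmf_of_set even_masks)"
    using inj[of 0] by (intro map_pmf_of_set_inj[symmetric]) (simp_all add: even_masks_def)
  finally show ?thesis .
qed

lemma finite_lists_length: "finite {xs :: 'a::finite list. length xs = n}"
  using finite_lists_length_eq[of "UNIV :: 'a set" n] by simp

lemma card_lists_length: "card {xs :: 'a::finite list. length xs = n} = CARD('a) ^ n"
  using card_lists_length_eq[of "UNIV :: 'a set" n] by simp

lemma set_pmf_lists_length: "set_pmf (pmf_of_set {xs :: 'a::finite list. length xs = n}) = {xs. length xs = n}"
proof -
  have "replicate n undefined \<in> {xs :: 'a list. length xs = n}" by simp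
  then show ?thesis by (intro set_pmf_of_set finite_lists_length) blast
qed

lemma set_pmf_even_masks: "set_pmf (pmf_of_set even_masks) = even_masks"
  by (simp add: even_masks_def)

locale masked_sum_scheme =
  fixes L :: nat and field :: "'a::{finite,field} itself"

sublocale masked_sum_scheme \<subseteq>
  spir_model 3 L "pmf_of_set even_masks" "pmf_of_set {Rs :: 'a list. length Rs = L}" field
  by unfold_locales (simp_all add: set_pmf_even_masks set_pmf_lists_length finite_lists_length,
      simp add: even_masks_def)

context masked_sum_scheme
begin

abbreviation A :: "nat \<Rightarrow> nat \<Rightarrow> (nat \<Rightarrow> nat \<Rightarrow> 'a) \<times> nat \<times> 'a list \<Rightarrow> 'a list" where
  "A \<equiv> answer mask_query (\<lambda>_. padded_answer)"

lemma support_\<Omega>: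
  assumes "\<omega> \<in> set_pmf \<Omega>"
  shows "W \<omega> \<in> msgs 3 L" and "F \<omega> \<in> even_masks" and "length (R \<omega>) = L"
  using assms by (auto simp: set_pmf_\<Omega> set_pmf_lists_length set_pmf_even_masks)

lemma length_A: "length (A n k \<omega>) = length (R \<omega>)"
  by (simp add: answer_def padded_answer_def)

lemma nth_A: "l < length (R \<omega>) \<Longrightarrow> A n k \<omega> ! l = mask_sum (mask_query n k (F \<omega>)) (W \<omega>) l + R \<omega> ! l"
  by (simp add: answer_def query_def padded_answer_def)

text \<open>The two queries differ exactly in message \<open>k\<close>, so the pads cancel in the difference of the
  answers.\<close>

lemma nth_A_second_server:
  assumes "k < 3" and "l < length (R \<omega>)"
  shows "A 1 k \<omega> ! l = A 0 k \<omega> ! l + (if bit (F \<omega>) k then - W \<omega> k l else W \<omega> k l)"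
  using assms by (simp add: nth_A mask_query_def mask_sum_toggle)

lemma answers_determine_message:
  assumes "k < 3"
  shows "determines \<Omega> (\<lambda>\<omega>. (F \<omega>, answers 2 mask_query (\<lambda>_. padded_answer) k \<omega>)) (\<lambda>\<omega>. W \<omega> k)"
proof (rule determinesI)
  fix \<omega> \<omega>' assume \<omega>: "\<omega> \<in> set_pmf \<Omega>" "\<omega>' \<in> set_pmf \<Omega>"
    and "(F \<omega>, answers 2 mask_query (\<lambda>_. padded_answer) k \<omega>)
       = (F \<omega>', answers 2 mask_query (\<lambda>_. padded_answer) k \<omega>')"
  then have F: "F \<omega> = F \<omega>'" and A: "A 0 k \<omega> = A 0 k \<omega>'" "A 1 k \<omega> = A 1 k \<omega>'"
    by (simp_all add: answers_two)
  show "W \<omega> k = W \<omega>' k"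
  proof (rule PiE_ext[OF msgs_component msgs_component])
    show "W \<omega> \<in> msgs 3 L" "W \<omega>' \<in> msgs 3 L" using support_\<Omega>(1) \<omega> by blast+
    fix l assume "l \<in> {..<L}"
    then have "l < length (R \<omega>)" and "l < length (R \<omega>')" using support_\<Omega>(3) \<omega> by auto
    then show "W \<omega> k l = W \<omega>' k l"
      using nth_A_second_server[OF assms, of l \<omega>] nth_A_second_server[OF assms, of l \<omega>'] A F
      by (auto split: if_splits)
  qed (use assms in simp)+
qed

lemma reliability:
  "k < 3 \<Longrightarrow> Hc (\<lambda>\<omega>. W \<omega> k) (\<lambda>\<omega>. (F \<omega>, answers 2 mask_query (\<lambda>_. padded_answer) k \<omega>)) = 0"
  by (rule cond_ent_eq_0_if_determines[OF finite_\<Omega> log_base_gt_1 answers_determine_message])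

lemma H_common_randomness_eq: "H R = L"
proof -
  have "replicate L undefined \<in> {Rs :: 'a list. length Rs = L}" by simp
  then have "{Rs :: 'a list. length Rs = L} \<noteq> {}" by blast
  then show ?thesis
    using H_common_randomness log_base_gt_1
    by (simp add: pmf_entropy_pmf_of_set finite_lists_length card_lists_length log_nat_power)
qed

lemma sample_determined_by_view:
  assumes "k < 3"
  shows "determines \<Omega> (\<lambda>\<omega>. (other_msgs 3 k (W \<omega>), F \<omega>, answers 2 mask_query (\<lambda>_. padded_answer) k \<omega>))
    (\<lambda>\<omega>. (F \<omega>, W \<omega>, R \<omega>))"
proof (rule determinesI)
  fix \<omega> \<omega>' assume \<omega>: "\<omega> \<in> set_pmf \<Omega>" "\<omega>' \<in> set_pmf \<Omega>"
    and eq: "(other_msgs 3 k (W \<omega>), F \<omega>, answers 2 mask_query (\<lambda>_. padded_answer) k \<omega>)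
       = (other_msgs 3 k (W \<omega>'), F \<omega>', answers 2 mask_query (\<lambda>_. padded_answer) k \<omega>')"
  then have F: "F \<omega> = F \<omega>'" and A: "A 0 k \<omega> = A 0 k \<omega>'"
    by (simp_all add: answers_two)
  have "W \<omega> k = W \<omega>' k"
    using determinesD[OF answers_determine_message[OF assms] \<omega>] eq by simp
  then have W: "W \<omega> = W \<omega>'"
    using eq by (intro msgs_eqI[OF support_\<Omega>(1)[OF \<omega>(1)] support_\<Omega>(1)[OF \<omega>(2)]])
      (auto simp: other_msgs_eq_iff)
  have "R \<omega> = R \<omega>'"
  proof (rule nth_equalityI)
    show "length (R \<omega>) = length (R \<omega>')" using support_\<Omega>(3) \<omega> by simp
    fix l assume "l < length (R \<omega>)"
    then show "R \<omega> ! l = R \<omega>' ! l"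
      using nth_A[of l \<omega> 0 k] nth_A[of l \<omega>' 0 k] A F W \<open>length (R \<omega>) = length (R \<omega>')\<close>
      by (simp add: algebra_simps)
  qed
  then show "(F \<omega>, W \<omega>, R \<omega>) = (F \<omega>', W \<omega>', R \<omega>')" using F W by simp
qed

lemma view_determined_by_first_answer:
  assumes "k < 3"
  shows "determines \<Omega> (\<lambda>\<omega>. (F \<omega>, A 0 k \<omega>, W \<omega> k))
    (\<lambda>\<omega>. (F \<omega>, answers 2 mask_query (\<lambda>_. padded_answer) k \<omega>))"
proof (rule determinesI)
  fix \<omega> \<omega>' assume "\<omega> \<in> set_pmf \<Omega>" "\<omega>' \<in> set_pmf \<Omega>"
    and eq: "(F \<omega>, A 0 k \<omega>, W \<omega> k) = (F \<omega>', A 0 k \<omega>', W \<omega>' k)"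
  have len: "length (R \<omega>) = length (R \<omega>')"
    using eq length_A[of 0 k \<omega>] length_A[of 0 k \<omega>'] by simp
  have "A 1 k \<omega> = A 1 k \<omega>'"
  proof (rule nth_equalityI)
    show "length (A 1 k \<omega>) = length (A 1 k \<omega>')" using len by (simp add: length_A)
    fix l assume "l < length (A 1 k \<omega>)"
    then show "A 1 k \<omega> ! l = A 1 k \<omega>' ! l"
      using nth_A_second_server[OF assms, of l \<omega>] nth_A_second_server[OF assms, of l \<omega>'] eq len
      by (simp add: length_A)
  qed
  then show "(F \<omega>, answers 2 mask_query (\<lambda>_. padded_answer) k \<omega>)
      = (F \<omega>', answers 2 mask_query (\<lambda>_. padded_answer) k \<omega>')"
    using eq by (simp add: answers_two)
qed

lemma database_privacy:
  assumes "k < 3"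
  shows "I (\<lambda>\<omega>. other_msgs 3 k (W \<omega>)) (\<lambda>\<omega>. (F \<omega>, answers 2 mask_query (\<lambda>_. padded_answer) k \<omega>)) = 0"
proof -
  let ?others = "\<lambda>\<omega>. other_msgs 3 k (W \<omega>)"
  let ?view = "\<lambda>\<omega>. (F \<omega>, answers 2 mask_query (\<lambda>_. padded_answer) k \<omega>)"
  have "H (\<lambda>\<omega>. (?others \<omega>, ?view \<omega>)) = H (\<lambda>\<omega>. (F \<omega>, W \<omega>, R \<omega>))"
    by (intro H_cong sample_determined_by_view[OF assms] determinesI)
      (auto simp: answers_def answer_def query_def)
  also have "\<dots> = H F + 3 * L + L"
    using user_randomness_independent messages_independent_common_randomness H_messages
      H_common_randomness_eq by (simp add: mutual_info_def)
  finally have joint: "H (\<lambda>\<omega>. (?others \<omega>, ?view \<omega>)) = H F + 3 * L + L" .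
  have "H ?view \<le> H (\<lambda>\<omega>. (F \<omega>, A 0 k \<omega>, W \<omega> k))"
    using view_determined_by_first_answer[OF assms] by (rule H_mono)
  also have "\<dots> \<le> H F + (H (A 0 k) + H (\<lambda>\<omega>. W \<omega> k))"
    using H_subadditive[of F "\<lambda>\<omega>. (A 0 k \<omega>, W \<omega> k)"] H_subadditive[of "A 0 k" "\<lambda>\<omega>. W \<omega> k"]
    by linarith
  also have "H (A 0 k) \<le> L"
    by (rule H_le_of_range[where A = "{xs. length xs = L}"])
      (auto simp: finite_lists_length card_lists_length length_A dest: support_\<Omega>(3))
  also have "H (\<lambda>\<omega>. W \<omega> k) \<le> L" using assms by (rule H_message_le)
  finally have "H ?view \<le> H F + 2 * L" by simp
  moreover have "H ?others \<le> 2 * L" using H_other_msgs_le[OF assms] by simp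
  ultimately have "I ?others ?view \<le> 0" using joint by (simp add: mutual_info_def)
  then show ?thesis using I_nonneg[of ?others ?view] by linarith
qed

lemma server_view_distribution:
  "map_pmf (\<lambda>\<omega>. (query mask_query n k \<omega>, A n k \<omega>, W \<omega>, R \<omega>)) \<Omega>
   = map_pmf (\<lambda>(w, q, r). (q, padded_answer q w r, w, r))
       (pair_pmf (pmf_of_set (msgs 3 L))
         (pair_pmf (map_pmf (mask_query n k) (pmf_of_set even_masks)) (pmf_of_set {Rs. length Rs = L})))"
proof -
  let ?h = "\<lambda>(w, f, r). (w, mask_query n k f, r)"
  have "map_pmf (\<lambda>\<omega>. (query mask_query n k \<omega>, A n k \<omega>, W \<omega>, R \<omega>)) \<Omega>
      = map_pmf (\<lambda>(w, q, r). (q, padded_answer q w r, w, r)) (map_pmf ?h \<Omega>)"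
    by (simp add: map_pmf_comp answer_def query_def split_def)
  also have "map_pmf ?h \<Omega>
      = pair_pmf (pmf_of_set (msgs 3 L))
          (pair_pmf (map_pmf (mask_query n k) (pmf_of_set even_masks)) (pmf_of_set {Rs. length Rs = L}))"
  proof -
    have h: "?h = (\<lambda>(w, fr). (id w, (\<lambda>(f, r). (mask_query n k f, id r)) fr))" by auto
    show ?thesis unfolding spir_space_def h map_pair pmf.map_id ..
  qed
  finally show ?thesis .
qed

lemma user_privacy:
  assumes "k < 3" and "k' < 3"
  shows "map_pmf (\<lambda>\<omega>. (query mask_query n k \<omega>, A n k \<omega>, W \<omega>, R \<omega>)) \<Omega>
    = map_pmf (\<lambda>\<omega>. (query mask_query n k' \<omega>, A n k' \<omega>, W \<omega>, R \<omega>)) \<Omega>"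
  unfolding server_view_distribution map_mask_query_even_masks[OF assms(1)]
    map_mask_query_even_masks[OF assms(2)] ..

lemma spir_scheme_masked_sum: "spir_scheme 2 3 L (pmf_of_set even_masks) (pmf_of_set {Rs :: 'a list. length Rs = L})
    mask_query (\<lambda>_. padded_answer)"
  unfolding spir_scheme_def Let_def
  using finite_user_randomness finite_common_randomness reliability user_privacy database_privacy
  by blast

lemma download_set:
  assumes "n < 2"
  shows "{A n k \<omega> | k \<omega>. k < 3 \<and> \<omega> \<in> set_pmf \<Omega>} = {xs. length xs = L}"
proof (intro equalityI subsetI)
  fix xs assume "xs \<in> {A n k \<omega> | k \<omega>. k < 3 \<and> \<omega> \<in> set_pmf \<Omega>}"
  then show "xs \<in> {xs. length xs = L}" by (auto simp: length_A dest: support_\<Omega>(3))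
next
  fix xs :: "'a list" assume xs: "xs \<in> {xs. length xs = L}"
  obtain V where V: "V \<in> (msgs 3 L :: (nat \<Rightarrow> nat \<Rightarrow> 'a) set)" using msgs_nonempty by blast
  define \<omega>\<^sub>0 where "\<omega>\<^sub>0 = (V, 0 :: nat, map (\<lambda>l. xs ! l - mask_sum (mask_query n 0 0) V l) [0..<L])"
  have "\<omega>\<^sub>0 \<in> set_pmf \<Omega>"
    using V by (simp add: \<omega>\<^sub>0_def set_pmf_\<Omega> set_pmf_even_masks set_pmf_lists_length)
      (simp add: even_masks_def)
  moreover have "A n 0 \<omega>\<^sub>0 = xs"
    using xs by (intro nth_equalityI) (simp_all add: \<omega>\<^sub>0_def length_A nth_A)
  ultimately show "xs \<in> {A n k \<omega> | k \<omega>. k < 3 \<and> \<omega> \<in> set_pmf \<Omega>}"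
    using zero_less_numeral by blast
qed

lemma download_cost_eq: "download_cost 2 3 L (pmf_of_set even_masks)
    (pmf_of_set {Rs :: 'a list. length Rs = L}) mask_query (\<lambda>_. padded_answer) = 2 * real L"
proof -
  have "log (real CARD('a)) (card {A n k \<omega> | k \<omega>. k < 3 \<and> \<omega> \<in> set_pmf \<Omega>}) = L" if "n < 2" for n
    unfolding download_set[OF that] using log_base_gt_1 by (simp add: card_lists_length log_nat_power)
  then show ?thesis by (simp add: download_cost_def numeral_2_eq_2)
qed

end

lemma upload_cost_mask_query: "upload_cost 2 3 (pmf_of_set even_masks) mask_query = 4"
proof -
  have "log 2 (card {mask_query n k f | k f. k < 3 \<and> f \<in> set_pmf (pmf_of_set even_masks)}) = 2"
    if "n < 2" for n
  proof -
    have "card {mask_query n k f | k f. k < 3 \<and> f \<in> set_pmf (pmf_of_set even_masks)} = 2 ^ 2"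
      using mask_query_range[OF that] by (simp add: set_pmf_even_masks) (simp add: even_masks_def)
    then show ?thesis by (simp only: of_nat_power log_nat_power) simp
  qed
  then show ?thesis by (simp add: upload_cost_def numeral_2_eq_2)
qed

lemma masked_sum_scheme_achieves:
  "spir_scheme 2 3 L (pmf_of_set even_masks) (pmf_of_set {Rs :: 'a::{finite,field} list. length Rs = L})
      mask_query (\<lambda>_. padded_answer)
   \<and> upload_cost 2 3 (pmf_of_set even_masks) mask_query = 4
   \<and> download_cost 2 3 L (pmf_of_set even_masks) (pmf_of_set {Rs :: 'a list. length Rs = L})
      mask_query (\<lambda>_. padded_answer) = 2 * real L
   \<and> pmf_entropy (real CARD('a)) (pmf_of_set {Rs :: 'a list. length Rs = L}) = real L"
proof -
  interpret masked_sum_scheme L "TYPE('a)" .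
  show ?thesis
    using spir_scheme_masked_sum upload_cost_mask_query download_cost_eq H_common_randomness H_common_randomness_eq
    by simp
qed

theorem theorem3:
  fixes L :: nat
  shows "(\<forall>(pF :: 'f pmf) (pR :: 'r pmf) (qry :: nat \<Rightarrow> nat \<Rightarrow> 'f \<Rightarrow> 'q)
            (ans :: nat \<Rightarrow> 'q \<Rightarrow> (nat \<Rightarrow> nat \<Rightarrow> 'a::{finite,field}) \<Rightarrow> 'r \<Rightarrow> 'b).
            spir_scheme 2 3 L pF pR qry ans \<and> upload_cost 2 3 pF qry = 4 \<longrightarrow>
            download_cost 2 3 L pF pR qry ans \<ge> 2 * real L \<and>
            pmf_entropy (real CARD('a)) pR \<ge> real L)
       \<and> (\<exists>(pF :: nat pmf) (pR :: 'a list pmf) (qry :: nat \<Rightarrow> nat \<Rightarrow> nat \<Rightarrow> nat)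
            (ans :: nat \<Rightarrow> nat \<Rightarrow> (nat \<Rightarrow> nat \<Rightarrow> 'a) \<Rightarrow> 'a list \<Rightarrow> 'a list).
            spir_scheme 2 3 L pF pR qry ans \<and> upload_cost 2 3 pF qry = 4 \<and>
            download_cost 2 3 L pF pR qry ans = 2 * real L \<and>
            pmf_entropy (real CARD('a)) pR = real L)"
  \<comment> \<open>The lower bounds hold for every two-server scheme.\<close>
  using two_server_spir_converse[where K = 3, simplified] masked_sum_scheme_achieves by blast

end
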